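(* Let $\mathcal H$ be a real Hilbert space, $t_0>0$, let $f:\mathcal H\to\mathbb R$ be convex and $\mathcal C^1$ with $L$-Lipschitz continuous gradient and with a minimizer $x^\star$; set $\bar f=\inf_{\mathcal H}f$. Let $\alpha>3$, $\gamma>0$, $\beta\ge0$, set $\beta(t)=\gamma+\beta/t$, let $b\in]0,\alpha-1]$ and $$a(t)=t^2\left(1+\frac{(\alpha-b)\gamma t-\beta(\alpha+1-b)}{t^2-\alpha\gamma t-\beta(\alpha+1)}\right),\qquad m(t)=\max\big(t,\,L|a(t)\beta(t)|,\,L|a(t)|\beta(t)^2\big).$$ Let $e\in\mathcal C([t_0,+\infty[;\mathcal H)$ with $m(\cdot)e(\cdot)\in L^1(t_0,+\infty;\mathcal H)$, and let $x$ be a solution of $$\ddot x(t)+\frac\alpha t\dot x(t)+\nabla f\big(x(t)+\beta(t)\dot x(t)\big)+e(t)=0.$$ Define $$E(t)=a(t)\big(f(x(t)+\beta(t)\dot x(t))-\bar f\big)+\tfrac12\|b(x(t)-x^\star)+t\dot x(t)\|^2+\tfrac{b(\alpha-1-b)}{2}\|x(t)-x^\star\|^2.$$ Then $\sup_{t\ge t_0}E(t)<+\infty$, $\sup_{t\ge t_0}t\|\dot x(t)\|<+\infty$ and $\sup_{t\ge t_0}\|x(t)-x^\star\|<+\infty$. *)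

theory Defs
  imports "HOL-Analysis.Analysis"
begin

definition betaf :: "real \<Rightarrow> real \<Rightarrow> real \<Rightarrow> real" where
  "betaf \<gamma> \<beta> t = \<gamma> + \<beta> / t"

definition acoef :: "real \<Rightarrow> real \<Rightarrow> real \<Rightarrow> real \<Rightarrow> real \<Rightarrow> real" where
  "acoef \<alpha> \<gamma> \<beta> b t =
     t\<^sup>2 * (1 + ((\<alpha> - b) * \<gamma> * t - \<beta> * (\<alpha> + 1 - b)) / (t\<^sup>2 - \<alpha> * \<gamma> * t - \<beta> * (\<alpha> + 1)))"

definition mfun :: "real \<Rightarrow> real \<Rightarrow> real \<Rightarrow> real \<Rightarrow> real \<Rightarrow> real \<Rightarrow> real" where
  "mfun L \<alpha> \<gamma> \<beta> b t =
     max t (max (L * \<bar>acoef \<alpha> \<gamma> \<beta> b t * betaf \<gamma> \<beta> t\<bar>)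
                (L * \<bar>acoef \<alpha> \<gamma> \<beta> b t\<bar> * (betaf \<gamma> \<beta> t)\<^sup>2))"

end

theory Submission
  imports Defs
begin

text \<open>
  For large t we use an energy of the same shape as E with b = 2, but with the coefficient of
  f(y) - min f, where y = x + beta(t) x', replaced by
  t^2 (t^2 - 2 gamma t - 2 beta) / (t^2 - alpha gamma t - (alpha + 1) beta).
  This coefficient is chosen so that all terms in <grad f(y), x'> cancel in the derivative of the
  energy along the dynamics. Convexity then yields
  E' <= (K / t^2) E + C (t + L t^2) |e| (1 + E), and since t + L t^2 is dominated by m(t),
  for which m e is integrable, Gronwall's lemma bounds E. This energy controls
  t^2 (f(y) - min f), |x - x*| and t |x'|, which together with a(t) <= 2 t^2 bound the energy
  of the statement for every b; on the compact initial interval continuity suffices.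
\<close>

lemma convex_on_gradient_inequality:
  fixes f :: "'a::real_inner \<Rightarrow> real"
  assumes cf: "convex_on UNIV f" and df: "(f has_derivative (\<lambda>h. G \<bullet> h)) (at y)"
  shows "f y + G \<bullet> (w - y) \<le> f w"
proof -
  define d where "d = w - y"
  let ?g = "\<lambda>s::real. f (y + s *\<^sub>R d)"
  have cg: "convex_on UNIV ?g"
  proof (rule convex_onI)
    fix t a b :: real assume t: "0 < t" "t < 1"
    have "y + ((1 - t) *\<^sub>R a + t *\<^sub>R b) *\<^sub>R d = (1 - t) *\<^sub>R (y + a *\<^sub>R d) + t *\<^sub>R (y + b *\<^sub>R d)"
      by (simp add: algebra_simps)
    then show "?g ((1 - t) *\<^sub>R a + t *\<^sub>R b) \<le> (1 - t) * ?g a + t * ?g b"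
      using convex_onD[OF cf, of t "y + a *\<^sub>R d" "y + b *\<^sub>R d"] t by simp
  qed simp
  have "(?g has_field_derivative (G \<bullet> d)) (at 0)"
  proof -
    have "((\<lambda>s. y + s *\<^sub>R d) has_derivative (\<lambda>h. h *\<^sub>R d)) (at 0)"
      by (auto intro!: derivative_eq_intros)
    moreover have "(f has_derivative (\<lambda>h. G \<bullet> h)) (at (y + 0 *\<^sub>R d))" using df by simp
    ultimately have "(?g has_derivative (\<lambda>h. G \<bullet> (h *\<^sub>R d))) (at 0)"
      by (rule diff_chain_at[unfolded o_def])
    then show ?thesis unfolding has_field_derivative_def
      by (rule has_derivative_eq_rhs) (auto simp: fun_eq_iff)
  qed
  from convex_on_imp_above_tangent[OF cg _ _ _ this, of 1]
  have "G \<bullet> d \<le> ?g 1 - ?g 0" by simp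
  then show ?thesis by (simp add: d_def)
qed

lemma gradient_eq_0_at_minimum:
  fixes f :: "'a::real_inner \<Rightarrow> real"
  assumes "(f has_derivative (\<lambda>h. G \<bullet> h)) (at xs)" and "\<And>y. f xs \<le> f y"
  shows "G = 0"
proof -
  have "(\<lambda>h. G \<bullet> h) = (\<lambda>h. 0)"
    by (rule differential_zero_maxmin[of xs UNIV]) (use assms in auto)
  then have "G \<bullet> G = 0" by metis
  then show ?thesis by simp
qed

lemma has_real_derivative_power2_norm:
  fixes w :: "real \<Rightarrow> 'a::real_inner"
  assumes "(w has_vector_derivative w') (at t)"
  shows "((\<lambda>s. (norm (w s))\<^sup>2) has_real_derivative 2 * (w t \<bullet> w')) (at t)"
proof -
  have "((\<lambda>s. w s \<bullet> w s) has_derivative (\<lambda>h. w t \<bullet> (h *\<^sub>R w') + (h *\<^sub>R w') \<bullet> w t)) (at t)"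
    by (rule has_derivative_inner[OF assms[unfolded has_vector_derivative_def]
          assms[unfolded has_vector_derivative_def]])
  then have "((\<lambda>s. w s \<bullet> w s) has_real_derivative 2 * (w t \<bullet> w')) (at t)"
    unfolding has_field_derivative_def
    by (rule has_derivative_eq_rhs) (auto simp: fun_eq_iff inner_commute)
  then show ?thesis by (simp add: power2_norm_eq_inner)
qed

lemma has_real_derivative_compose_gradient:
  fixes f :: "'a::real_inner \<Rightarrow> real"
  assumes "(f has_derivative (\<lambda>h. G \<bullet> h)) (at (y t))" and "(y has_vector_derivative y') (at t)"
  shows "((\<lambda>s. f (y s)) has_real_derivative G \<bullet> y') (at t)"
proof -
  have "((\<lambda>s. f (y s)) has_derivative (\<lambda>h. G \<bullet> (h *\<^sub>R y'))) (at t)"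
    using diff_chain_at[OF assms(2)[unfolded has_vector_derivative_def] assms(1)] by (simp add: o_def)
  then show ?thesis unfolding has_field_derivative_def
    by (rule has_derivative_eq_rhs) (auto simp: fun_eq_iff)
qed

lemma gronwall_upper_bound:
  fixes \<phi> \<phi>' H h :: "real \<Rightarrow> real"
  assumes pos: "\<And>s. T \<le> s \<Longrightarrow> 0 < \<phi> s"
    and d\<phi>: "\<And>s. T \<le> s \<Longrightarrow> (\<phi> has_real_derivative \<phi>' s) (at s)"
    and dH: "\<And>s. T \<le> s \<Longrightarrow> (H has_real_derivative h s) (at s)"
    and growth: "\<And>s. T \<le> s \<Longrightarrow> \<phi>' s \<le> h s * \<phi> s"
    and "T \<le> t"
  shows "\<phi> t \<le> \<phi> T * exp (H t - H T)"
proof -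
  have "ln (\<phi> t) - H t \<le> ln (\<phi> T) - H T"
  proof (rule DERIV_nonpos_imp_nonincreasing[OF \<open>T \<le> t\<close>])
    fix s assume "T \<le> s" "s \<le> t"
    with pos d\<phi> dH have "((\<lambda>s. ln (\<phi> s) - H s) has_real_derivative \<phi>' s / \<phi> s - h s) (at s)"
      by (auto intro!: derivative_eq_intros simp: field_simps)
    moreover have "\<phi>' s / \<phi> s \<le> h s"
      using growth pos \<open>T \<le> s\<close> by (simp add: divide_le_eq)
    ultimately show "\<exists>y. ((\<lambda>s. ln (\<phi> s) - H s) has_real_derivative y) (at s) \<and> y \<le> 0"
      by force
  qed
  then have "exp (ln (\<phi> t)) \<le> exp (ln (\<phi> T) + (H t - H T))" by simp
  then show ?thesis using pos[of t] pos[of T] \<open>T \<le> t\<close> by (simp add: exp_add)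
qed

lemma bdd_above_image_atLeast:
  fixes h :: "real \<Rightarrow> real"
  assumes "continuous_on {a..} h" and "\<And>t. T \<le> t \<Longrightarrow> h t \<le> M"
  shows "bdd_above (h ` {a..})"
proof -
  have "continuous_on {a..T} h" using assms(1) by (rule continuous_on_subset) auto
  then have "bdd_above (h ` {a..T})"
    by (intro bounded_imp_bdd_above compact_imp_bounded compact_continuous_image) auto
  moreover have "bdd_above (h ` {T..})"
    using assms(2) by (auto intro: bdd_aboveI[of _ M])
  moreover have "{a..} \<subseteq> {a..T} \<union> {T..}" by auto
  ultimately show ?thesis by (metis bdd_above_Un bdd_above_mono image_Un image_mono)
qed

lemma has_real_derivative_integral_atLeast:
  fixes G :: "real \<Rightarrow> real"
  assumes "continuous_on {a..} G" and "a < s"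
  shows "((\<lambda>s. integral {a..s} G) has_real_derivative G s) (at s)"
proof -
  have "continuous_on {a..s + 1} G" using assms(1) by (rule continuous_on_subset) auto
  from integral_has_real_derivative[OF this, of s] assms(2) show ?thesis
    by (simp add: at_within_interior[of s "{a..s + 1}"])
qed

lemma quadratic_bounds_large_argument:
  fixes p q t :: real
  assumes "0 \<le> p" "0 \<le> q" "2 * p + 2 * q + 2 \<le> t"
  shows "t\<^sup>2 / 2 \<le> t\<^sup>2 - p * t - q" "t\<^sup>2 - p * t - q \<le> t\<^sup>2"
proof -
  have "1 * (q + 1) \<le> t * (t / 2 - p)"
    using assms by (intro mult_mono) auto
  then show "t\<^sup>2 / 2 \<le> t\<^sup>2 - p * t - q" by (simp add: power2_eq_square algebra_simps)
  have "0 \<le> p * t" using assms by simp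
  with assms show "t\<^sup>2 - p * t - q \<le> t\<^sup>2" by linarith
qed

lemma quadratic_ratio_bounds:
  fixes p q p' q' t :: real
  assumes "0 \<le> p" "0 \<le> q" "2 * p + 2 * q + 2 \<le> t"
    and "0 \<le> p'" "0 \<le> q'" "2 * p' + 2 * q' + 2 \<le> t"
  shows "t\<^sup>2 / 2 \<le> t\<^sup>2 * (t\<^sup>2 - p * t - q) / (t\<^sup>2 - p' * t - q')"
    and "t\<^sup>2 * (t\<^sup>2 - p * t - q) / (t\<^sup>2 - p' * t - q') \<le> 2 * t\<^sup>2"
proof -
  define n d where "n = t\<^sup>2 - p * t - q" and "d = t\<^sup>2 - p' * t - q'"
  have n: "t\<^sup>2 / 2 \<le> n" "n \<le> t\<^sup>2" and d: "t\<^sup>2 / 2 \<le> d" "d \<le> t\<^sup>2"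
    using quadratic_bounds_large_argument[OF assms(1-3)] quadratic_bounds_large_argument[OF assms(4-6)]
    unfolding n_def d_def by simp_all
  have "0 < t\<^sup>2" using assms by simp
  with d have "0 < d" by linarith
  have "t\<^sup>2 * (d / 2) \<le> t\<^sup>2 * n" "t\<^sup>2 * n \<le> t\<^sup>2 * (2 * d)"
    using n d by (intro mult_left_mono; simp)+
  with \<open>0 < d\<close> show "t\<^sup>2 / 2 \<le> t\<^sup>2 * (t\<^sup>2 - p * t - q) / (t\<^sup>2 - p' * t - q')"
    and "t\<^sup>2 * (t\<^sup>2 - p * t - q) / (t\<^sup>2 - p' * t - q') \<le> 2 * t\<^sup>2"
    unfolding n_def[symmetric] d_def[symmetric] by (simp_all add: field_simps)
qed

lemma betaf_bounds:
  assumes "0 \<le> \<beta>" "1 \<le> t"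
  shows "\<gamma> \<le> betaf \<gamma> \<beta> t" "betaf \<gamma> \<beta> t \<le> \<gamma> + \<beta>"
proof -
  have "0 \<le> \<beta> / t" "\<beta> / t \<le> \<beta>"
    using assms by (auto simp: divide_le_eq mult_le_cancel_left1)
  then show "\<gamma> \<le> betaf \<gamma> \<beta> t" "betaf \<gamma> \<beta> t \<le> \<gamma> + \<beta>"
    by (auto simp: betaf_def)
qed

lemma acoef_bounds:
  assumes "0 < \<gamma>" "0 \<le> \<beta>" "0 < b" "b \<le> \<alpha>" and t: "2*\<alpha>*\<gamma> + 4*(\<alpha>+1)*\<beta> + 2 \<le> t"
  shows "t\<^sup>2 / 2 \<le> acoef \<alpha> \<gamma> \<beta> b t" "acoef \<alpha> \<gamma> \<beta> b t \<le> 2 * t\<^sup>2"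
proof -
  have "b * \<gamma> \<le> \<alpha> * \<gamma>" "0 \<le> \<alpha> * \<beta>" "0 \<le> b * \<beta>"
    using assms by auto
  with t \<open>0 \<le> \<beta>\<close> have thrN: "2 * (b * \<gamma>) + 2 * (\<beta> * (2 * \<alpha> + 2 - b)) + 2 \<le> t"
    and thrD: "2 * (\<alpha> * \<gamma>) + 2 * (\<beta> * (\<alpha> + 1)) + 2 \<le> t"
    by (simp_all add: algebra_simps)
  have nonneg: "0 \<le> b * \<gamma>" "0 \<le> \<beta> * (2 * \<alpha> + 2 - b)" "0 \<le> \<alpha> * \<gamma>" "0 \<le> \<beta> * (\<alpha> + 1)"
    using assms by auto
  define D where "D = t\<^sup>2 - \<alpha> * \<gamma> * t - \<beta> * (\<alpha> + 1)"
  have "t\<^sup>2 / 2 \<le> D" "0 < t\<^sup>2"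
    using quadratic_bounds_large_argument[OF nonneg(3,4) thrD] thrD nonneg by (simp_all add: D_def)
  then have "D \<noteq> 0" by linarith
  then have "acoef \<alpha> \<gamma> \<beta> b t = t\<^sup>2 * (D + ((\<alpha> - b) * \<gamma> * t - \<beta> * (\<alpha> + 1 - b))) / D"
    unfolding acoef_def D_def[symmetric] by (simp add: field_simps)
  also have "D + ((\<alpha> - b) * \<gamma> * t - \<beta> * (\<alpha> + 1 - b)) = t\<^sup>2 - b * \<gamma> * t - \<beta> * (2 * \<alpha> + 2 - b)"
    by (simp add: D_def algebra_simps)
  finally have "acoef \<alpha> \<gamma> \<beta> b t
      = t\<^sup>2 * (t\<^sup>2 - b * \<gamma> * t - \<beta> * (2 * \<alpha> + 2 - b)) / (t\<^sup>2 - \<alpha> * \<gamma> * t - \<beta> * (\<alpha> + 1))"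
    by (simp add: D_def)
  with quadratic_ratio_bounds[OF nonneg(1,2) thrN nonneg(3,4) thrD]
  show "t\<^sup>2 / 2 \<le> acoef \<alpha> \<gamma> \<beta> b t" "acoef \<alpha> \<gamma> \<beta> b t \<le> 2 * t\<^sup>2"
    by (simp_all add: mult.assoc)
qed

lemma mfun_dominates_weight:
  assumes "0 < \<gamma>" "0 \<le> \<beta>" "0 \<le> L" "0 < b" "b \<le> \<alpha>"
    and t: "2*\<alpha>*\<gamma> + 4*(\<alpha>+1)*\<beta> + 2 \<le> t"
  shows "t + L * t\<^sup>2 \<le> (1 + 2 / \<gamma>) * mfun L \<alpha> \<gamma> \<beta> b t"
proof -
  have a: "t\<^sup>2 / 2 \<le> acoef \<alpha> \<gamma> \<beta> b t" using acoef_bounds(1)[OF assms(1,2,4,5) t] .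
  have "1 \<le> t" using assms by (smt (verit) mult_nonneg_nonneg)
  have "0 \<le> acoef \<alpha> \<gamma> \<beta> b t" using a zero_le_power2[of t] by linarith
  then have "t\<^sup>2 / 2 * \<gamma> \<le> acoef \<alpha> \<gamma> \<beta> b t * betaf \<gamma> \<beta> t"
    using a betaf_bounds[OF \<open>0 \<le> \<beta>\<close> \<open>1 \<le> t\<close>, of \<gamma>] assms by (intro mult_mono) auto
  then have "L * (t\<^sup>2 / 2 * \<gamma>) \<le> L * \<bar>acoef \<alpha> \<gamma> \<beta> b t * betaf \<gamma> \<beta> t\<bar>"
    using \<open>0 \<le> L\<close> by (intro mult_left_mono) auto
  also have "\<dots> \<le> mfun L \<alpha> \<gamma> \<beta> b t" by (simp add: mfun_def)
  finally have "L * t\<^sup>2 \<le> 2 / \<gamma> * mfun L \<alpha> \<gamma> \<beta> b t"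
    using \<open>0 < \<gamma>\<close> by (simp add: field_simps)
  moreover have "t \<le> mfun L \<alpha> \<gamma> \<beta> b t" by (simp add: mfun_def)
  ultimately show ?thesis by (simp add: algebra_simps)
qed

lemma lyapunov_sum_le:
  fixes z w :: "'a::real_normed_vector"
  assumes "0 \<le> A" "A \<le> 2 * t\<^sup>2" "0 \<le> F" "t\<^sup>2 * F \<le> M" "norm z \<le> M" "t * norm w \<le> M"
    "0 < t" "0 \<le> c"
  shows "A * F + 1/2 * (norm (b *\<^sub>R z + t *\<^sub>R w))\<^sup>2 + c * (norm z)\<^sup>2
    \<le> 2 * M + 1/2 * ((\<bar>b\<bar> + 1) * M)\<^sup>2 + c * M\<^sup>2"
proof -
  have "A * F \<le> 2 * t\<^sup>2 * F" using assms by (intro mult_right_mono) auto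
  moreover have "norm (b *\<^sub>R z + t *\<^sub>R w) \<le> (\<bar>b\<bar> + 1) * M"
  proof -
    have "norm (b *\<^sub>R z + t *\<^sub>R w) \<le> \<bar>b\<bar> * norm z + t * norm w"
      using norm_triangle_ineq[of "b *\<^sub>R z" "t *\<^sub>R w"] \<open>0 < t\<close> by simp
    also have "\<dots> \<le> \<bar>b\<bar> * M + M" using assms by (intro add_mono mult_left_mono) auto
    finally show ?thesis by (simp add: algebra_simps)
  qed
  then have "(norm (b *\<^sub>R z + t *\<^sub>R w))\<^sup>2 \<le> ((\<bar>b\<bar> + 1) * M)\<^sup>2" by (simp add: power_mono)
  moreover have "c * (norm z)\<^sup>2 \<le> c * M\<^sup>2" using assms by (simp add: mult_left_mono power_mono)
  ultimately show ?thesis using assms by linarith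
qed

locale perturbed_inertial_dynamics =
  fixes f :: "'a::real_inner \<Rightarrow> real" and gradf :: "'a \<Rightarrow> 'a" and xs :: 'a
    and L \<alpha> \<gamma> \<beta> t0 :: real and x x' x'' e :: "real \<Rightarrow> 'a"
  assumes convex: "convex_on UNIV f"
    and grad: "\<And>y. (f has_derivative (\<lambda>h. gradf y \<bullet> h)) (at y)"
    and L: "0 \<le> L" and lip: "\<And>y z. norm (gradf y - gradf z) \<le> L * norm (y - z)"
    and minimizer: "\<And>y. f xs \<le> f y"
    and alpha: "3 < \<alpha>" and gamma: "0 < \<gamma>" and beta: "0 \<le> \<beta>" and t0: "0 < t0"
    and x_has_derivative: "\<And>t. t0 < t \<Longrightarrow> (x has_vector_derivative x' t) (at t)"
    and x'_has_derivative: "\<And>t. t0 < t \<Longrightarrow> (x' has_vector_derivative x'' t) (at t)"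
    and ode: "\<And>t. t0 < t \<Longrightarrow> x'' t + (\<alpha> / t) *\<^sub>R x' t + gradf (x t + betaf \<gamma> \<beta> t *\<^sub>R x' t) + e t = 0"
begin

definition y :: "real \<Rightarrow> 'a" where
  "y t = x t + betaf \<gamma> \<beta> t *\<^sub>R x' t"

definition gap :: "real \<Rightarrow> real" where
  "gap t = f (y t) - f xs"

definition den :: "real \<Rightarrow> real" where
  "den t = t\<^sup>2 - \<alpha> * \<gamma> * t - (\<alpha> + 1) * \<beta>"

definition coef :: "real \<Rightarrow> real" where
  "coef t = t\<^sup>2 * (t\<^sup>2 - 2 * \<gamma> * t - 2 * \<beta>) / den t"

definition coef_deriv :: "real \<Rightarrow> real" where
  "coef_deriv t = ((4 * t ^ 3 - 6 * \<gamma> * t\<^sup>2 - 4 * \<beta> * t) * den t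
     - t\<^sup>2 * (t\<^sup>2 - 2 * \<gamma> * t - 2 * \<beta>) * (2 * t - \<alpha> * \<gamma>)) / (den t)\<^sup>2"

definition energy :: "real \<Rightarrow> real" where
  "energy t = coef t * gap t + 1/2 * (norm (2 *\<^sub>R (x t - xs) + t *\<^sub>R x' t))\<^sup>2
     + (\<alpha> - 3) * (norm (x t - xs))\<^sup>2"

definition e_multiplier :: "real \<Rightarrow> 'a" where
  "e_multiplier t = (coef t * betaf \<gamma> \<beta> t) *\<^sub>R gradf (y t) + (2 * t) *\<^sub>R (x t - xs) + t\<^sup>2 *\<^sub>R x' t"

definition energy_rate :: "real \<Rightarrow> real" where
  "energy_rate t = coef_deriv t * gap t - coef t * betaf \<gamma> \<beta> t * (norm (gradf (y t)))\<^sup>2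
     - 2 * t * ((y t - xs) \<bullet> gradf (y t)) - (\<alpha> - 3) * t * (norm (x' t))\<^sup>2
     - e_multiplier t \<bullet> e t"

definition t1 :: real where
  "t1 = max (t0 + 1) (2 * \<alpha> * \<gamma> + 4 * (\<alpha> + 1) * \<beta> + 2)"

lemma x''_eq: "t0 < t \<Longrightarrow> x'' t = - (\<alpha> / t) *\<^sub>R x' t - gradf (y t) - e t"
  using ode[of t] by (simp add: y_def algebra_simps eq_neg_iff_add_eq_0)

lemma y_has_derivative:
  assumes "t0 < t"
  shows "(y has_vector_derivative
    (1 - \<beta> / t\<^sup>2 - \<alpha> * betaf \<gamma> \<beta> t / t) *\<^sub>R x' t - betaf \<gamma> \<beta> t *\<^sub>R (gradf (y t) + e t)) (at t)"
proof -
  have "t \<noteq> 0" using assms t0 by simp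
  then have "(betaf \<gamma> \<beta> has_real_derivative - \<beta> / t\<^sup>2) (at t)"
    unfolding betaf_def[abs_def] by (auto intro!: derivative_eq_intros simp: power2_eq_square)
  then have "(y has_vector_derivative x' t + (betaf \<gamma> \<beta> t *\<^sub>R x'' t + (- \<beta> / t\<^sup>2) *\<^sub>R x' t)) (at t)"
    unfolding y_def[abs_def] using x_has_derivative[OF assms] x'_has_derivative[OF assms]
    by (intro derivative_intros)
  then show ?thesis
    using x''_eq[OF assms] by (simp add: algebra_simps)
qed

lemma rescaled_velocity_has_derivative:
  assumes "t0 < t"
  shows "((\<lambda>s. 2 *\<^sub>R (x s - xs) + s *\<^sub>R x' s) has_vector_derivative
    (3 - \<alpha>) *\<^sub>R x' t - t *\<^sub>R (gradf (y t) + e t)) (at t)"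
proof -
  have "t \<noteq> 0" using assms t0 by simp
  then have "t *\<^sub>R x'' t = - \<alpha> *\<^sub>R x' t - t *\<^sub>R (gradf (y t) + e t)"
    by (simp add: x''_eq[OF assms] scaleR_diff_right scaleR_add_right)
  then have "2 *\<^sub>R x' t + (t *\<^sub>R x'' t + 1 *\<^sub>R x' t)
      = (3 - \<alpha>) *\<^sub>R x' t - t *\<^sub>R (gradf (y t) + e t)"
    using scaleR_add_left[of 2 1 "x' t"] by (simp add: algebra_simps)
  moreover have "((\<lambda>s. 2 *\<^sub>R (x s - xs) + s *\<^sub>R x' s) has_vector_derivative
      2 *\<^sub>R x' t + (t *\<^sub>R x'' t + 1 *\<^sub>R x' t)) (at t)"
    using x_has_derivative[OF assms] x'_has_derivative[OF assms] by (auto intro!: derivative_eq_intros)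
  ultimately show ?thesis by simp
qed

lemma coef_has_derivative:
  assumes "den t \<noteq> 0"
  shows "(coef has_real_derivative coef_deriv t) (at t)"
proof -
  have dN: "((\<lambda>s. s\<^sup>2 * (s\<^sup>2 - 2 * \<gamma> * s - 2 * \<beta>)) has_real_derivative
      4 * t ^ 3 - 6 * \<gamma> * t\<^sup>2 - 4 * \<beta> * t) (at t)"
    by (auto intro!: derivative_eq_intros simp: power2_eq_square power3_eq_cube algebra_simps)
  have dD: "(den has_real_derivative 2 * t - \<alpha> * \<gamma>) (at t)"
    unfolding den_def[abs_def] by (auto intro!: derivative_eq_intros)
  show ?thesis
    using DERIV_divide[OF dN dD assms] unfolding coef_def[abs_def] coef_deriv_def
    by (simp add: power2_eq_square)
qed

lemma coef_mult_eq:
  assumes "t \<noteq> 0" "den t \<noteq> 0"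
  shows "coef t * (1 - \<beta> / t\<^sup>2 - \<alpha> * betaf \<gamma> \<beta> t / t) = t\<^sup>2 - 2 * t * betaf \<gamma> \<beta> t"
proof -
  have "1 - \<beta> / t\<^sup>2 - \<alpha> * betaf \<gamma> \<beta> t / t = den t / t\<^sup>2"
    using assms(1) by (simp add: den_def betaf_def field_simps power2_eq_square)
  then have "coef t * (1 - \<beta> / t\<^sup>2 - \<alpha> * betaf \<gamma> \<beta> t / t) = t\<^sup>2 - 2 * \<gamma> * t - 2 * \<beta>"
    using assms by (simp add: coef_def)
  also have "\<dots> = t\<^sup>2 - 2 * t * betaf \<gamma> \<beta> t"
    using assms(1) by (simp add: betaf_def field_simps)
  finally show ?thesis .
qed

lemma energy_has_derivative:
  assumes "t0 < t" "den t \<noteq> 0"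
  shows "(energy has_real_derivative energy_rate t) (at t)"
proof -
  define B where "B = betaf \<gamma> \<beta> t"
  define c where "c = 1 - \<beta> / t\<^sup>2 - \<alpha> * B / t"
  define g where "g = gradf (y t)"
  have dgap: "(gap has_real_derivative g \<bullet> (c *\<^sub>R x' t - B *\<^sub>R (g + e t))) (at t)"
    using has_real_derivative_compose_gradient[OF grad y_has_derivative[OF assms(1)]]
    unfolding gap_def[abs_def] B_def c_def g_def by (auto intro!: derivative_eq_intros)
  have dz: "((\<lambda>s. x s - xs) has_vector_derivative x' t) (at t)"
    using x_has_derivative[OF assms(1)] by (auto intro!: derivative_eq_intros)
  have raw: "(energy has_real_derivative
      coef_deriv t * gap t + coef t * (g \<bullet> (c *\<^sub>R x' t - B *\<^sub>R (g + e t)))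
      + 1/2 * (2 * ((2 *\<^sub>R (x t - xs) + t *\<^sub>R x' t) \<bullet> ((3 - \<alpha>) *\<^sub>R x' t - t *\<^sub>R (g + e t))))
      + (\<alpha> - 3) * (2 * ((x t - xs) \<bullet> x' t))) (at t)"
    unfolding energy_def[abs_def] g_def
    by (rule derivative_eq_intros coef_has_derivative[OF assms(2)] dgap[unfolded g_def]
        has_real_derivative_power2_norm[OF rescaled_velocity_has_derivative[OF assms(1)]]
        has_real_derivative_power2_norm[OF dz] refl)+ simp_all
  have "(y t - xs) \<bullet> g = (x t - xs) \<bullet> g + B * (x' t \<bullet> g)"
    by (simp add: y_def B_def inner_diff_left inner_add_left)
  moreover have "coef t * (g \<bullet> (c *\<^sub>R x' t - B *\<^sub>R (g + e t)))
      = (t\<^sup>2 - 2 * t * B) * (g \<bullet> x' t) - coef t * B * (g \<bullet> g) - coef t * B * (g \<bullet> e t)"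
  proof -
    have "coef t * (g \<bullet> (c *\<^sub>R x' t - B *\<^sub>R (g + e t)))
        = (coef t * c) * (g \<bullet> x' t) - coef t * B * (g \<bullet> g) - coef t * B * (g \<bullet> e t)"
      by (simp add: inner_diff_right inner_add_right algebra_simps)
    also have "coef t * c = t\<^sup>2 - 2 * t * B"
      using coef_mult_eq assms t0 by (simp add: B_def c_def)
    finally show ?thesis .
  qed
  ultimately show ?thesis
    by (intro DERIV_cong[OF raw])
      (simp add: energy_rate_def e_multiplier_def power2_norm_eq_inner flip: g_def B_def,
       simp add: inner_add_left inner_add_right inner_diff_left inner_diff_right inner_commute
         power2_eq_square algebra_simps)
qed

lemma t1_leD:
  assumes "t1 \<le> t"
  shows "t0 < t" "1 \<le> t" "2 * \<alpha> * \<gamma> + 4 * (\<alpha> + 1) * \<beta> + 2 \<le> t"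
    and "2 * (\<alpha> * \<gamma>) + 2 * ((\<alpha> + 1) * \<beta>) + 2 \<le> t" "2 * (2 * \<gamma>) + 2 * (2 * \<beta>) + 2 \<le> t"
proof -
  show t: "t0 < t" "1 \<le> t" "2 * \<alpha> * \<gamma> + 4 * (\<alpha> + 1) * \<beta> + 2 \<le> t"
    using assms t0 unfolding t1_def by auto
  have "0 \<le> \<alpha> * \<beta>" "2 * \<gamma> \<le> \<alpha> * \<gamma>" using alpha beta gamma by auto
  with t(3) beta show "2 * (\<alpha> * \<gamma>) + 2 * ((\<alpha> + 1) * \<beta>) + 2 \<le> t" "2 * (2 * \<gamma>) + 2 * (2 * \<beta>) + 2 \<le> t"
    by (simp_all add: algebra_simps)
qed

lemma den_ge:
  assumes "t1 \<le> t"
  shows "t\<^sup>2 / 2 \<le> den t"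
  using quadratic_bounds_large_argument[OF _ _ t1_leD(4)[OF assms]] alpha gamma beta
  by (simp add: den_def)

lemma den_pos: "t1 \<le> t \<Longrightarrow> 0 < den t"
  using den_ge[of t] t1_leD(2)[of t] zero_less_power[of t 2] by linarith

lemma coef_bounds:
  assumes "t1 \<le> t"
  shows "t\<^sup>2 / 2 \<le> coef t" "coef t \<le> 2 * t\<^sup>2"
  using quadratic_ratio_bounds[OF _ _ t1_leD(5)[OF assms] _ _ t1_leD(4)[OF assms]] alpha gamma beta
  by (simp_all add: coef_def den_def)

lemma coef_deriv_le:
  assumes "t1 \<le> t"
  shows "coef_deriv t \<le> 2 * t + 4 * ((\<alpha> - 2) * \<gamma>)"
proof -
  define p where "p = (\<alpha> - 2) * \<gamma>"
  define P where "P = p * t ^ 3 - 2 * p * \<alpha> * \<gamma> * t\<^sup>2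
    - ((\<alpha> - 1) * \<beta> * \<alpha> * \<gamma> + 3 * p * (\<alpha> + 1) * \<beta>) * t - 2 * (\<alpha> - 1) * \<beta> * (\<alpha> + 1) * \<beta>"
  have "0 < t" using t1_leD(2)[OF assms] by simp
  have D: "t\<^sup>2 / 2 \<le> den t" using den_ge[OF assms] .
  have "0 < t\<^sup>2" "0 < den t" using \<open>0 < t\<close> den_pos[OF assms] by simp_all
  have "(4 * t ^ 3 - 6 * \<gamma> * t\<^sup>2 - 4 * \<beta> * t) * den t
      - t\<^sup>2 * (t\<^sup>2 - 2 * \<gamma> * t - 2 * \<beta>) * (2 * t - \<alpha> * \<gamma>) - 2 * t * (den t)\<^sup>2 = t * P"
    unfolding den_def P_def p_def by algebra
  with \<open>0 < den t\<close> have deriv_eq: "coef_deriv t - 2 * t = t * P / (den t)\<^sup>2"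
    unfolding coef_deriv_def by (simp add: field_simps)
  have "0 \<le> p" "0 \<le> \<alpha> - 1" using alpha gamma by (auto simp: p_def)
  then have "0 \<le> 2 * p * \<alpha> * \<gamma> * t\<^sup>2" "0 \<le> 2 * (\<alpha> - 1) * \<beta> * (\<alpha> + 1) * \<beta>"
    and "0 \<le> ((\<alpha> - 1) * \<beta> * \<alpha> * \<gamma> + 3 * p * (\<alpha> + 1) * \<beta>) * t"
    using alpha gamma beta \<open>0 < t\<close> by simp_all
  then have "P \<le> p * t ^ 3" unfolding P_def by linarith
  then have "t * P \<le> p * (t\<^sup>2)\<^sup>2"
    using \<open>0 < t\<close> mult_left_mono[of P "p * t ^ 3" t] by (simp add: power2_eq_square power3_eq_cube mult_ac)
  also have "\<dots> \<le> p * (2 * den t)\<^sup>2"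
    using D \<open>0 \<le> p\<close> \<open>0 < t\<^sup>2\<close> by (intro mult_left_mono power_mono) auto
  finally have "t * P / (den t)\<^sup>2 \<le> 4 * p"
    using \<open>0 < den t\<close> by (simp add: divide_le_eq power_mult_distrib)
  with deriv_eq show ?thesis by (simp add: p_def)
qed

lemma energy_lower_bounds:
  assumes "t1 \<le> t"
  shows "0 \<le> gap t" "t\<^sup>2 * gap t \<le> 2 * energy t"
    and "(norm (2 *\<^sub>R (x t - xs) + t *\<^sub>R x' t))\<^sup>2 \<le> 2 * energy t"
    and "(\<alpha> - 3) * (norm (x t - xs))\<^sup>2 \<le> energy t"
proof -
  show "0 \<le> gap t" using minimizer by (simp add: gap_def)
  with coef_bounds[OF assms] have a: "t\<^sup>2 * gap t \<le> 2 * (coef t * gap t)" "0 \<le> coef t * gap t"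
    using mult_right_mono[of "t\<^sup>2" "2 * coef t" "gap t"] by auto
  have z: "0 \<le> (\<alpha> - 3) * (norm (x t - xs))\<^sup>2" using alpha by simp
  note v = zero_le_power2[of "norm (2 *\<^sub>R (x t - xs) + t *\<^sub>R x' t)"]
  show "t\<^sup>2 * gap t \<le> 2 * energy t" unfolding energy_def distrib_left using a z v by linarith
  show "(norm (2 *\<^sub>R (x t - xs) + t *\<^sub>R x' t))\<^sup>2 \<le> 2 * energy t"
    unfolding energy_def distrib_left using a z by linarith
  show "(\<alpha> - 3) * (norm (x t - xs))\<^sup>2 \<le> energy t" unfolding energy_def using a v by linarith
qed

lemma energy_nonneg: "t1 \<le> t \<Longrightarrow> 0 \<le> energy t"
  using energy_lower_bounds(3)[of t] zero_le_power2[of "norm (2 *\<^sub>R (x t - xs) + t *\<^sub>R x' t)"]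
  by linarith

lemma state_le_energy:
  "\<exists>C. 0 \<le> C \<and> (\<forall>t\<ge>t1. norm (x t - xs) + t * norm (x' t) \<le> C * (1 + energy t))"
proof (intro exI[of _ "4 + 3 / (\<alpha> - 3)"] conjI allI impI)
  show "0 \<le> 4 + 3 / (\<alpha> - 3)" using alpha by simp
  fix t assume t: "t1 \<le> t"
  define q where "q = 1 / (\<alpha> - 3)"
  have le_square: "r \<le> 1 + r\<^sup>2" for r :: real
  proof -
    have "2 * r \<le> r\<^sup>2 + 1" using zero_le_power2[of "r - 1"] by (simp add: power2_diff)
    with zero_le_power2[of r] show ?thesis by linarith
  qed
  have "0 \<le> energy t" using energy_nonneg[OF t] .
  have "0 < q" using alpha by (simp add: q_def)
  have "(norm (x t - xs))\<^sup>2 \<le> q * energy t"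
    using energy_lower_bounds(4)[OF t] alpha by (simp add: q_def field_simps)
  then have z: "norm (x t - xs) \<le> 1 + q * energy t" using le_square[of "norm (x t - xs)"] by linarith
  have v: "norm (2 *\<^sub>R (x t - xs) + t *\<^sub>R x' t) \<le> 1 + 2 * energy t"
    using le_square[of "norm (2 *\<^sub>R (x t - xs) + t *\<^sub>R x' t)"] energy_lower_bounds(3)[OF t]
    by linarith
  have "t * norm (x' t) = norm ((2 *\<^sub>R (x t - xs) + t *\<^sub>R x' t) - 2 *\<^sub>R (x t - xs))"
    using t1_leD(2)[OF t] by simp
  also have "\<dots> \<le> norm (2 *\<^sub>R (x t - xs) + t *\<^sub>R x' t) + 2 * norm (x t - xs)"
    by (metis norm_triangle_ineq4 norm_scaleR abs_numeral)
  finally have "norm (x t - xs) + t * norm (x' t) \<le> 4 + 2 * energy t + 3 * (q * energy t)"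
    using z v by linarith
  also have "\<dots> \<le> (4 + 3 * q) * (1 + energy t)"
    using \<open>0 \<le> energy t\<close> \<open>0 < q\<close> by (simp add: algebra_simps)
  finally show "norm (x t - xs) + t * norm (x' t) \<le> (4 + 3 / (\<alpha> - 3)) * (1 + energy t)"
    by (simp add: q_def)
qed

lemma gap_term_le:
  assumes "t1 \<le> t"
  shows "(coef_deriv t - 2 * t) * gap t \<le> 8 * ((\<alpha> - 2) * \<gamma>) / t\<^sup>2 * energy t"
proof -
  have "0 < t\<^sup>2" using t1_leD(2)[OF assms] by simp
  have "(coef_deriv t - 2 * t) * gap t \<le> 4 * ((\<alpha> - 2) * \<gamma>) * gap t"
    using coef_deriv_le[OF assms] energy_lower_bounds(1)[OF assms] by (intro mult_right_mono) auto
  also have "\<dots> = 8 * ((\<alpha> - 2) * \<gamma>) / t\<^sup>2 * (t\<^sup>2 * gap t / 2)"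
    using \<open>0 < t\<^sup>2\<close> by simp
  also have "\<dots> \<le> 8 * ((\<alpha> - 2) * \<gamma>) / t\<^sup>2 * energy t"
    using energy_lower_bounds(2)[OF assms] alpha gamma by (intro mult_left_mono) auto
  finally show ?thesis .
qed

lemma norm_gradient_le:
  assumes "t1 \<le> t"
  shows "norm (gradf (y t)) \<le> L * ((1 + \<gamma> + \<beta>) * (norm (x t - xs) + t * norm (x' t)))"
proof -
  have "1 \<le> t" "\<gamma> \<le> betaf \<gamma> \<beta> t" "betaf \<gamma> \<beta> t \<le> \<gamma> + \<beta>"
    using t1_leD(2)[OF assms] betaf_bounds[OF beta] by auto
  then have "betaf \<gamma> \<beta> t * norm (x' t) \<le> (\<gamma> + \<beta>) * (t * norm (x' t))"
    using gamma beta by (intro mult_mono) (auto simp: mult_le_cancel_right1)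
  moreover have "norm (y t - xs) \<le> norm (x t - xs) + betaf \<gamma> \<beta> t * norm (x' t)"
    using norm_triangle_ineq[of "x t - xs" "betaf \<gamma> \<beta> t *\<^sub>R x' t"] gamma \<open>\<gamma> \<le> betaf \<gamma> \<beta> t\<close>
    by (simp add: y_def algebra_simps)
  ultimately have "norm (y t - xs) \<le> norm (x t - xs) + (\<gamma> + \<beta>) * (t * norm (x' t))"
    by linarith
  also have "\<dots> \<le> (1 + \<gamma> + \<beta>) * (norm (x t - xs) + t * norm (x' t))"
    using gamma beta \<open>1 \<le> t\<close> mult_nonneg_nonneg[of "\<gamma> + \<beta>" "norm (x t - xs)"]
    by (simp add: algebra_simps)
  finally have "norm (y t - xs) \<le> (1 + \<gamma> + \<beta>) * (norm (x t - xs) + t * norm (x' t))" .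
  then show ?thesis
    using lip[of "y t" xs] gradient_eq_0_at_minimum[OF grad minimizer] L
    by (auto intro: order_trans mult_left_mono)
qed

lemma norm_e_multiplier_le:
  assumes "t1 \<le> t"
  shows "norm (e_multiplier t)
    \<le> 2 * (1 + \<gamma> + \<beta>)\<^sup>2 * (t + L * t\<^sup>2) * (norm (x t - xs) + t * norm (x' t))"
proof -
  define R where "R = norm (x t - xs) + t * norm (x' t)"
  define k where "k = 1 + \<gamma> + \<beta>"
  have "1 \<le> t" "0 \<le> R" "1 \<le> k" using t1_leD(2)[OF assms] gamma beta by (auto simp: R_def k_def)
  have "0 \<le> coef t * betaf \<gamma> \<beta> t" "coef t * betaf \<gamma> \<beta> t \<le> 2 * t\<^sup>2 * k"
    using coef_bounds[OF assms] betaf_bounds[OF beta \<open>1 \<le> t\<close>, of \<gamma>] gamma zero_le_power2[of t]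
    by (auto simp: k_def intro!: mult_mono)
  then have "norm ((coef t * betaf \<gamma> \<beta> t) *\<^sub>R gradf (y t)) \<le> (2 * t\<^sup>2 * k) * (L * (k * R))"
    using norm_gradient_le[OF assms] gamma beta by (auto simp: R_def k_def intro!: mult_mono)
  moreover have "norm ((2 * t) *\<^sub>R (x t - xs) + t\<^sup>2 *\<^sub>R x' t) \<le> 2 * t * R"
  proof -
    have "norm ((2 * t) *\<^sub>R (x t - xs) + t\<^sup>2 *\<^sub>R x' t)
        \<le> norm ((2 * t) *\<^sub>R (x t - xs)) + norm (t\<^sup>2 *\<^sub>R x' t)"
      by (rule norm_triangle_ineq)
    also have "\<dots> = 2 * t * norm (x t - xs) + t * (t * norm (x' t))"
      using \<open>1 \<le> t\<close> by (simp add: power2_eq_square)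
    also have "\<dots> \<le> 2 * t * R"
      using \<open>1 \<le> t\<close> by (simp add: R_def algebra_simps)
    finally show ?thesis .
  qed
  moreover have "2 * t * R \<le> 2 * k\<^sup>2 * (t * R)"
  proof -
    have "1 * (t * R) \<le> k\<^sup>2 * (t * R)"
      using \<open>1 \<le> k\<close> \<open>1 \<le> t\<close> \<open>0 \<le> R\<close> by (intro mult_right_mono one_le_power) auto
    then show ?thesis by simp
  qed
  moreover have "norm ((coef t * betaf \<gamma> \<beta> t) *\<^sub>R gradf (y t) + ((2 * t) *\<^sub>R (x t - xs) + t\<^sup>2 *\<^sub>R x' t))
      \<le> norm ((coef t * betaf \<gamma> \<beta> t) *\<^sub>R gradf (y t)) + norm ((2 * t) *\<^sub>R (x t - xs) + t\<^sup>2 *\<^sub>R x' t)"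
    by (rule norm_triangle_ineq)
  moreover have "(2 * t\<^sup>2 * k) * (L * (k * R)) + 2 * k\<^sup>2 * (t * R) = 2 * k\<^sup>2 * (t + L * t\<^sup>2) * R"
    by (simp add: power2_eq_square algebra_simps)
  ultimately show ?thesis
    unfolding e_multiplier_def add.assoc[of "(coef t * betaf \<gamma> \<beta> t) *\<^sub>R gradf (y t)"]
      R_def[symmetric] k_def[symmetric]
    by linarith
qed

lemma perturbation_term_le:
  "\<exists>C. 0 \<le> C \<and> (\<forall>t\<ge>t1.
    - (e_multiplier t \<bullet> e t) \<le> C * ((t + L * t\<^sup>2) * norm (e t)) * (1 + energy t))"
proof -
  obtain C where "0 \<le> C" and C: "\<And>t. t1 \<le> t \<Longrightarrow> norm (x t - xs) + t * norm (x' t) \<le> C * (1 + energy t)"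
    using state_le_energy by blast
  define k where "k = 2 * (1 + \<gamma> + \<beta>)\<^sup>2"
  show ?thesis
  proof (intro exI[of _ "k * C"] conjI allI impI)
    show "0 \<le> k * C" using \<open>0 \<le> C\<close> by (simp add: k_def)
    fix t assume t: "t1 \<le> t"
    have "0 \<le> k * (t + L * t\<^sup>2)" using t1_leD(2)[OF t] L by (simp add: k_def)
    have "- (e_multiplier t \<bullet> e t) \<le> norm (e_multiplier t) * norm (e t)"
      using Cauchy_Schwarz_ineq2[of "e_multiplier t" "e t"] by linarith
    also have "\<dots> \<le> k * (t + L * t\<^sup>2) * (C * (1 + energy t)) * norm (e t)"
      using norm_e_multiplier_le[OF t] mult_left_mono[OF C[OF t] \<open>0 \<le> k * (t + L * t\<^sup>2)\<close>]
      by (intro mult_right_mono) (simp_all add: k_def)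
    finally show "- (e_multiplier t \<bullet> e t) \<le> k * C * ((t + L * t\<^sup>2) * norm (e t)) * (1 + energy t)"
      by (simp add: algebra_simps)
  qed
qed

lemma energy_rate_le:
  "\<exists>K C. 0 \<le> K \<and> 0 \<le> C \<and> (\<forall>t\<ge>t1.
    energy_rate t \<le> (K / t\<^sup>2 + C * ((t + L * t\<^sup>2) * norm (e t))) * (1 + energy t))"
proof -
  obtain C where "0 \<le> C" and C: "\<And>t. t1 \<le> t \<Longrightarrow>
      - (e_multiplier t \<bullet> e t) \<le> C * ((t + L * t\<^sup>2) * norm (e t)) * (1 + energy t)"
    using perturbation_term_le by blast
  define K where "K = 8 * ((\<alpha> - 2) * \<gamma>)"
  show ?thesis
  proof (intro exI[of _ K, OF exI[of _ C]] conjI allI impI)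
    show K: "0 \<le> K" using alpha gamma by (simp add: K_def)
    show "0 \<le> C" by fact
    fix t assume t: "t1 \<le> t"
    have "0 < t" using t1_leD(2)[OF t] by simp
    have "gap t \<le> (y t - xs) \<bullet> gradf (y t)"
      using convex_on_gradient_inequality[OF convex grad, of "y t" xs]
      by (simp add: gap_def inner_diff_left inner_diff_right inner_commute)
    then have "- (2 * t * ((y t - xs) \<bullet> gradf (y t))) \<le> - (2 * t * gap t)"
      using \<open>0 < t\<close> by simp
    moreover have "0 \<le> coef t * betaf \<gamma> \<beta> t * (norm (gradf (y t)))\<^sup>2"
    proof -
      have "0 \<le> coef t" using coef_bounds(1)[OF t] zero_le_power2[of t] by linarith
      moreover have "0 \<le> betaf \<gamma> \<beta> t"
        using betaf_bounds(1)[of \<beta> t \<gamma>] beta t1_leD(2)[OF t] gamma by linarith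
      ultimately show ?thesis by simp
    qed
    moreover have "0 \<le> (\<alpha> - 3) * t * (norm (x' t))\<^sup>2" using alpha \<open>0 < t\<close> by simp
    ultimately have "energy_rate t \<le> (coef_deriv t - 2 * t) * gap t - e_multiplier t \<bullet> e t"
      unfolding energy_rate_def left_diff_distrib by linarith
    also have "\<dots> \<le> K / t\<^sup>2 * energy t + C * ((t + L * t\<^sup>2) * norm (e t)) * (1 + energy t)"
      using gap_term_le[OF t] C[OF t] by (simp add: K_def)
    also have "\<dots> \<le> K / t\<^sup>2 * (1 + energy t) + C * ((t + L * t\<^sup>2) * norm (e t)) * (1 + energy t)"
      using K by (intro add_right_mono mult_left_mono) auto
    also have "\<dots> = (K / t\<^sup>2 + C * ((t + L * t\<^sup>2) * norm (e t))) * (1 + energy t)"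
      by (simp add: distrib_right)
    finally show "energy_rate t \<le> (K / t\<^sup>2 + C * ((t + L * t\<^sup>2) * norm (e t))) * (1 + energy t)" .
  qed
qed

lemma energy_bounded:
  assumes G_cont: "continuous_on {t0..} G" and G_int: "G integrable_on {t0..}"
    and G_nonneg: "\<And>t. t0 \<le> t \<Longrightarrow> 0 \<le> G t"
    and dominated: "\<And>t. t1 \<le> t \<Longrightarrow> (t + L * t\<^sup>2) * norm (e t) \<le> G t"
  shows "\<exists>M. \<forall>t\<ge>t1. energy t \<le> M"
proof -
  obtain K C where "0 \<le> K" "0 \<le> C" and rate: "\<And>t. t1 \<le> t \<Longrightarrow>
      energy_rate t \<le> (K / t\<^sup>2 + C * ((t + L * t\<^sup>2) * norm (e t))) * (1 + energy t)"
    using energy_rate_le by blast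
  define H where "H s = - K / s + C * integral {t0..s} G" for s
  have dH: "(H has_real_derivative K / s\<^sup>2 + C * G s) (at s)" if "t1 \<le> s" for s
    using has_real_derivative_integral_atLeast[OF G_cont t1_leD(1)[OF that]] t0 t1_leD(1)[OF that]
    unfolding H_def by (auto intro!: derivative_eq_intros simp: power2_eq_square)
  have gronwall: "1 + energy t \<le> (1 + energy t1) * exp (H t - H t1)" if "t1 \<le> t" for t
  proof (rule gronwall_upper_bound[OF _ _ dH _ that])
    fix s assume s: "t1 \<le> s"
    show "0 < 1 + energy s" using energy_nonneg[OF s] by simp
    from den_pos[OF s] show "((\<lambda>s. 1 + energy s) has_real_derivative energy_rate s) (at s)"
      using energy_has_derivative[OF t1_leD(1)[OF s]] by (auto intro!: derivative_eq_intros)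
    have "C * ((s + L * s\<^sup>2) * norm (e s)) \<le> C * G s"
      using dominated[OF s] \<open>0 \<le> C\<close> by (rule mult_left_mono)
    then have "(K / s\<^sup>2 + C * ((s + L * s\<^sup>2) * norm (e s))) * (1 + energy s)
        \<le> (K / s\<^sup>2 + C * G s) * (1 + energy s)"
      using energy_nonneg[OF s] by (intro mult_right_mono) auto
    with rate[OF s] show "energy_rate s \<le> (K / s\<^sup>2 + C * G s) * (1 + energy s)"
      by linarith
  qed
  have H_le: "H t \<le> C * integral {t0..} G" if "t1 \<le> t" for t
  proof -
    have "integral {t0..t} G \<le> integral {t0..} G"
      using G_int G_nonneg by (intro integral_subset_le) (auto intro: integrable_on_subinterval)
    moreover have "0 \<le> K / t" using \<open>0 \<le> K\<close> t1_leD(2)[OF that] by simp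
    ultimately show ?thesis
      unfolding H_def using \<open>0 \<le> C\<close> mult_left_mono by fastforce
  qed
  have bound: "1 + energy t \<le> (1 + energy t1) * exp (C * integral {t0..} G - H t1)"
    if "t1 \<le> t" for t
  proof -
    have "(1 + energy t1) * exp (H t - H t1) \<le> (1 + energy t1) * exp (C * integral {t0..} G - H t1)"
      using H_le[OF that] energy_nonneg[of t1] by (intro mult_left_mono) auto
    with gronwall[OF that] show ?thesis by linarith
  qed
  show ?thesis
  proof (intro exI allI impI)
    fix t assume "t1 \<le> t"
    from bound[OF this] show "energy t \<le> (1 + energy t1) * exp (C * integral {t0..} G - H t1) - 1"
      by linarith
  qed
qed

lemma state_bounded:
  fixes m :: "real \<Rightarrow> real"
  assumes m_cont: "continuous_on {t0..} m" and e_cont: "continuous_on {t0..} e"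
    and me_L1: "set_integrable lborel {t0..} (\<lambda>t. norm (m t *\<^sub>R e t))"
    and "0 \<le> c" and weight: "\<And>t. t1 \<le> t \<Longrightarrow> t + L * t\<^sup>2 \<le> c * m t"
  shows "\<exists>M. \<forall>t\<ge>t1. t\<^sup>2 * gap t \<le> M \<and> norm (x t - xs) \<le> M \<and> t * norm (x' t) \<le> M"
proof -
  define G where "G t = c * norm (m t *\<^sub>R e t)" for t
  have "continuous_on {t0..} G" unfolding G_def using m_cont e_cont by (intro continuous_intros)
  moreover have "G integrable_on {t0..}"
    unfolding G_def using set_borel_integral_eq_integral(1)[OF me_L1] by (rule integrable_on_mult_right)
  moreover have "(t + L * t\<^sup>2) * norm (e t) \<le> G t" if "t1 \<le> t" for t
  proof -
    have "(t + L * t\<^sup>2) * norm (e t) \<le> c * m t * norm (e t)"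
      using weight[OF that] by (rule mult_right_mono) simp
    also have "\<dots> \<le> c * \<bar>m t\<bar> * norm (e t)"
      using \<open>0 \<le> c\<close> by (intro mult_right_mono mult_left_mono) auto
    finally show ?thesis by (simp add: G_def mult.assoc)
  qed
  ultimately obtain M where M: "\<And>t. t1 \<le> t \<Longrightarrow> energy t \<le> M"
    using energy_bounded[of G] \<open>0 \<le> c\<close> by (force simp: G_def)
  obtain C where "0 \<le> C" and C: "\<And>t. t1 \<le> t \<Longrightarrow> norm (x t - xs) + t * norm (x' t) \<le> C * (1 + energy t)"
    using state_le_energy by blast
  show ?thesis
  proof (intro exI[of _ "max (2 * M) (C * (1 + M))"] allI impI conjI)
    fix t assume t: "t1 \<le> t"
    have "C * (1 + energy t) \<le> C * (1 + M)" using M[OF t] \<open>0 \<le> C\<close> by (simp add: mult_left_mono)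
    moreover have "0 \<le> norm (x t - xs)" "0 \<le> t * norm (x' t)" using t1_leD(2)[OF t] by auto
    moreover note energy_lower_bounds(2)[OF t] M[OF t] C[OF t]
    ultimately show "t\<^sup>2 * gap t \<le> max (2 * M) (C * (1 + M))"
      and "norm (x t - xs) \<le> max (2 * M) (C * (1 + M))"
      and "t * norm (x' t) \<le> max (2 * M) (C * (1 + M))"
      unfolding le_max_iff_disj by linarith+
  qed
qed

lemma lyapunov_function_le:
  assumes "0 < b" "b \<le> \<alpha> - 1" and t: "t1 \<le> t"
    and M: "t\<^sup>2 * gap t \<le> M" "norm (x t - xs) \<le> M" "t * norm (x' t) \<le> M"
  shows "acoef \<alpha> \<gamma> \<beta> b t * gap t + 1/2 * (norm (b *\<^sub>R (x t - xs) + t *\<^sub>R x' t))\<^sup>2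
      + b * (\<alpha> - 1 - b) / 2 * (norm (x t - xs))\<^sup>2
    \<le> 2 * M + 1/2 * ((b + 1) * M)\<^sup>2 + b * (\<alpha> - 1 - b) / 2 * M\<^sup>2"
proof -
  have A: "0 \<le> acoef \<alpha> \<gamma> \<beta> b t" "acoef \<alpha> \<gamma> \<beta> b t \<le> 2 * t\<^sup>2"
    using acoef_bounds[OF gamma beta \<open>0 < b\<close> _ t1_leD(3)[OF t]] assms(2) zero_le_power2[of t] by auto
  have "0 < t" "0 \<le> b * (\<alpha> - 1 - b) / 2" using t1_leD(2)[OF t] assms(1,2) by auto
  from lyapunov_sum_le[OF A energy_lower_bounds(1)[OF t] M this, of b] show ?thesis
    using \<open>0 < b\<close> by simp
qed

end

lemma continuous_on_acoef:
  assumes "0 < t0" and "\<And>t. t0 \<le> t \<Longrightarrow> t\<^sup>2 - \<alpha> * \<gamma> * t - \<beta> * (\<alpha> + 1) \<noteq> 0"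
  shows "continuous_on {t0..} (acoef \<alpha> \<gamma> \<beta> b)"
  unfolding acoef_def using assms by (intro continuous_intros) auto

lemma continuous_on_betaf: "0 < t0 \<Longrightarrow> continuous_on {t0..} (betaf \<gamma> \<beta>)"
  unfolding betaf_def by (intro continuous_intros) auto

lemma continuous_on_mfun:
  assumes "0 < t0" and "\<And>t. t0 \<le> t \<Longrightarrow> t\<^sup>2 - \<alpha> * \<gamma> * t - \<beta> * (\<alpha> + 1) \<noteq> 0"
  shows "continuous_on {t0..} (mfun L \<alpha> \<gamma> \<beta> b)"
  unfolding mfun_def using continuous_on_acoef[OF assms] continuous_on_betaf[OF assms(1)]
  by (intro continuous_intros) auto

theorem lemma2:
  fixes f :: "'H::{real_inner, complete_space} \<Rightarrow> real"
    and gradf :: "'H \<Rightarrow> 'H"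
    and x x' x'' e :: "real \<Rightarrow> 'H"
    and xs :: 'H
    and t0 L \<alpha> \<gamma> \<beta> b :: real
  assumes t0: "t0 > 0"
    and convex: "convex_on UNIV f"
    and grad: "\<And>y. (f has_derivative (\<lambda>h. gradf y \<bullet> h)) (at y)"
    and C1: "continuous_on UNIV gradf"
    and L: "L \<ge> 0"
    and lip: "\<And>y z. norm (gradf y - gradf z) \<le> L * norm (y - z)"
    and minimizer: "\<And>y. f xs \<le> f y"
    and alpha: "\<alpha> > 3" and gamma: "\<gamma> > 0" and beta: "\<beta> \<ge> 0"
    and b: "0 < b" "b \<le> \<alpha> - 1"
    and denom: "\<And>t. t \<ge> t0 \<Longrightarrow> t\<^sup>2 - \<alpha> * \<gamma> * t - \<beta> * (\<alpha> + 1) \<noteq> 0"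
    and e_cont: "continuous_on {t0..} e"
    and e_L1: "set_integrable lborel {t0..} (\<lambda>t. norm (mfun L \<alpha> \<gamma> \<beta> b t *\<^sub>R e t))"
    and dx: "\<And>t. t \<ge> t0 \<Longrightarrow> (x has_vector_derivative x' t) (at t within {t0..})"
    and ddx: "\<And>t. t \<ge> t0 \<Longrightarrow> (x' has_vector_derivative x'' t) (at t within {t0..})"
    and ode: "\<And>t. t \<ge> t0 \<Longrightarrow>
       x'' t + (\<alpha> / t) *\<^sub>R x' t + gradf (x t + betaf \<gamma> \<beta> t *\<^sub>R x' t) + e t = 0"
  shows "bdd_above ((\<lambda>t. acoef \<alpha> \<gamma> \<beta> b t * (f (x t + betaf \<gamma> \<beta> t *\<^sub>R x' t) - Inf (range f))
             + 1/2 * (norm (b *\<^sub>R (x t - xs) + t *\<^sub>R x' t))\<^sup>2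
             + b * (\<alpha> - 1 - b) / 2 * (norm (x t - xs))\<^sup>2) ` {t0..})
      \<and> bdd_above ((\<lambda>t. t * norm (x' t)) ` {t0..})
      \<and> bdd_above ((\<lambda>t. norm (x t - xs)) ` {t0..})"
proof -
  have at_interior: "at t within {t0..} = at t" if "t0 < t" for t
    using that by (intro at_within_interior) auto
  interpret perturbed_inertial_dynamics f gradf xs L \<alpha> \<gamma> \<beta> t0 x x' x'' e
  proof unfold_locales
    fix t assume "t0 < t"
    then show "(x has_vector_derivative x' t) (at t)" "(x' has_vector_derivative x'' t) (at t)"
      using dx ddx at_interior by (metis less_imp_le)+
  qed (use assms in auto)
  obtain M where M: "\<And>t. t1 \<le> t \<Longrightarrow> t\<^sup>2 * gap t \<le> M \<and> norm (x t - xs) \<le> M \<and> t * norm (x' t) \<le> M"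
    using state_bounded[OF continuous_on_mfun[OF t0 denom] e_cont e_L1, of "1 + 2 / \<gamma>"]
      mfun_dominates_weight[OF gamma beta L b(1) _ t1_leD(3)] b gamma by fastforce
  have "Inf (range f) = f xs" by (rule cInf_eq_minimum) (use minimizer in auto)
  then have E_le: "acoef \<alpha> \<gamma> \<beta> b t * (f (x t + betaf \<gamma> \<beta> t *\<^sub>R x' t) - Inf (range f))
      + 1/2 * (norm (b *\<^sub>R (x t - xs) + t *\<^sub>R x' t))\<^sup>2 + b * (\<alpha> - 1 - b) / 2 * (norm (x t - xs))\<^sup>2
    \<le> 2 * M + 1/2 * ((b + 1) * M)\<^sup>2 + b * (\<alpha> - 1 - b) / 2 * M\<^sup>2" if "t1 \<le> t" for t
    using lyapunov_function_le[OF b that] M[OF that] by (simp add: gap_def y_def)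
  have x_cont: "continuous_on {t0..} x" "continuous_on {t0..} x'"
    using dx ddx by (auto intro: continuous_on_vector_derivative)
  have f_y_cont: "continuous_on {t0..} (\<lambda>t. f (x t + betaf \<gamma> \<beta> t *\<^sub>R x' t))"
    using grad x_cont continuous_on_betaf[OF t0]
    by (intro continuous_on_compose2[OF has_derivative_continuous_on[of UNIV f]] continuous_intros) auto
  show ?thesis
    using E_le M x_cont f_y_cont continuous_on_acoef[OF t0 denom]
    by (intro conjI bdd_above_image_atLeast[where T = t1]) (auto intro!: continuous_intros)
qed

end
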